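(* Let $k$ be a positive integer and let $D$ be a connected digraph (i.e., its underlying undirected graph is connected) of order $n\ge\max\{k,2\}$. Then $\gamma_{rk}(D)\le\gamma_{trk}(D)\le 2\gamma_{rk}(D)-k+1$, and both bounds are sharp (attained by some such digraphs).
   Context: All digraphs are finite, with no loops or multiple arcs (pairs of opposite arcs are allowed). $N^-(v)$ denotes the set of in-neighbors of $v$. A vertex is isolated if it has no in-neighbor and no out-neighbor. For a positive integer $k$, a $k$-rainbow dominating function ($k$RDF) on $D$ is a function $f:V(D)\to\mathcal P(\{1,\dots,k\})$ such that every $v$ with $f(v)=\emptyset$ satisfies $\bigcup_{u\in N^-(v)}f(u)=\{1,\dots,k\}$; its weight is $\omega(f)=\sum_v|f(v)|$; $\gamma_{rk}(D)$ is the minimum weight of a $k$RDF on $D$. If $D$ has no isolated vertex, a total $k$RDF (T$k$RDF) is a $k$RDF $f$ such that the subdigraph induced by $\{v:f(v)\ne\emptyset\}$ has no isolated vertex; $\gamma_{trk}(D)$ is the minimum weight of a T$k$RDF. *)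

theory Defs
  imports Main
begin

text \<open>A digraph is given by a vertex set V and an arc relation A (pairs (u,v) = arc u -> v).
  Finite, no loops, no multiple arcs (A is a set); opposite arcs are allowed.\<close>
definition digraph :: "'a set \<Rightarrow> ('a \<times> 'a) set \<Rightarrow> bool" where
  "digraph V A \<longleftrightarrow> finite V \<and> A \<subseteq> V \<times> V \<and> (\<forall>v. (v, v) \<notin> A)"

definition connected_digraph :: "'a set \<Rightarrow> ('a \<times> 'a) set \<Rightarrow> bool" where
  "connected_digraph V A \<longleftrightarrow> (\<forall>u\<in>V. \<forall>v\<in>V. (u, v) \<in> (A \<union> A\<inverse>)\<^sup>*)"

definition in_nbrs :: "('a \<times> 'a) set \<Rightarrow> 'a \<Rightarrow> 'a set" where
  "in_nbrs A v = {u. (u, v) \<in> A}"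

definition isolated :: "'a set \<Rightarrow> ('a \<times> 'a) set \<Rightarrow> 'a \<Rightarrow> bool" where
  "isolated V A v \<longleftrightarrow> \<not> (\<exists>u\<in>V. (u, v) \<in> A \<or> (v, u) \<in> A)"

definition no_isolated :: "'a set \<Rightarrow> ('a \<times> 'a) set \<Rightarrow> bool" where
  "no_isolated V A \<longleftrightarrow> (\<forall>v\<in>V. \<not> isolated V A v)"

definition induced_arcs :: "('a \<times> 'a) set \<Rightarrow> 'a set \<Rightarrow> ('a \<times> 'a) set" where
  "induced_arcs A S = A \<inter> (S \<times> S)"

definition is_kRDF :: "nat \<Rightarrow> 'a set \<Rightarrow> ('a \<times> 'a) set \<Rightarrow> ('a \<Rightarrow> nat set) \<Rightarrow> bool" where
  "is_kRDF k V A f \<longleftrightarrow>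
     (\<forall>v\<in>V. f v \<subseteq> {1..k}) \<and>
     (\<forall>v\<in>V. f v = {} \<longrightarrow> (\<Union>u\<in>in_nbrs A v. f u) = {1..k})"

definition weight :: "'a set \<Rightarrow> ('a \<Rightarrow> nat set) \<Rightarrow> nat" where
  "weight V f = (\<Sum>v\<in>V. card (f v))"

definition is_TkRDF :: "nat \<Rightarrow> 'a set \<Rightarrow> ('a \<times> 'a) set \<Rightarrow> ('a \<Rightarrow> nat set) \<Rightarrow> bool" where
  "is_TkRDF k V A f \<longleftrightarrow> is_kRDF k V A f \<and>
     (let S = {v\<in>V. f v \<noteq> {}} in no_isolated S (induced_arcs A S))"

definition gamma_rk :: "nat \<Rightarrow> 'a set \<Rightarrow> ('a \<times> 'a) set \<Rightarrow> nat" where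
  "gamma_rk k V A = (LEAST w. \<exists>f. is_kRDF k V A f \<and> weight V f = w)"

definition gamma_trk :: "nat \<Rightarrow> 'a set \<Rightarrow> ('a \<times> 'a) set \<Rightarrow> nat" where
  "gamma_trk k V A = (LEAST w. \<exists>f. is_TkRDF k V A f \<and> weight V f = w)"

end

theory Submission
  imports Defs
begin

text \<open>Every total function is rainbow dominating, which gives the lower bound. For the upper
  bound take a minimum kRDF f. If f vanishes nowhere, it is already total, since a connected
  digraph on at least two vertices has no isolated vertex. Otherwise f vanishes at some w, and
  the in-neighbours N of w carry weight at least k. Add colour 1 at w and at one neighbour of
  each vertex of the support outside N; every vertex of the new support then has a neighbour in
  it. This costs at most 1 + (weight f - k). The bounds are attained by the complete digraph on
  k vertices (the path 0, 1, 2 when k = 1) and by the out-star with k leaves.\<close>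

lemma gamma_rk_le: "is_kRDF k V A f \<Longrightarrow> gamma_rk k V A \<le> weight V f"
  unfolding gamma_rk_def by (rule Least_le) auto

lemma gamma_trk_le: "is_TkRDF k V A f \<Longrightarrow> gamma_trk k V A \<le> weight V f"
  unfolding gamma_trk_def by (rule Least_le) auto

lemma gamma_rk_attained:
  "is_kRDF k V A f \<Longrightarrow> \<exists>g. is_kRDF k V A g \<and> weight V g = gamma_rk k V A"
  unfolding gamma_rk_def by (rule LeastI_ex) auto

lemma gamma_trk_attained:
  "is_TkRDF k V A f \<Longrightarrow> \<exists>g. is_TkRDF k V A g \<and> weight V g = gamma_trk k V A"
  unfolding gamma_trk_def by (rule LeastI_ex) auto

lemma is_kRDF_const_full: "is_kRDF k V A (\<lambda>_. {1..k})"
  by (simp add: is_kRDF_def)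

lemma is_TkRDF_iff:
  "is_TkRDF k V A f \<longleftrightarrow> is_kRDF k V A f \<and>
     (\<forall>v\<in>V. f v \<noteq> {} \<longrightarrow> (\<exists>u\<in>V. f u \<noteq> {} \<and> ((u, v) \<in> A \<or> (v, u) \<in> A)))"
  unfolding is_TkRDF_def no_isolated_def isolated_def induced_arcs_def Let_def by blast

lemma gamma_rk_le_gamma_trk:
  assumes "is_TkRDF k V A f"
  shows "gamma_rk k V A \<le> gamma_trk k V A"
proof -
  obtain g where g: "is_TkRDF k V A g" "weight V g = gamma_trk k V A"
    using gamma_trk_attained[OF assms] by blast
  from g(1) have "is_kRDF k V A g" by (simp add: is_TkRDF_iff)
  from gamma_rk_le[OF this] g(2) show ?thesis by simp
qed

section \<open>Lower bounds on the weight of a rainbow dominating function\<close>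

lemma digraph_in_nbrs_subset: "digraph V A \<Longrightarrow> in_nbrs A v \<subseteq> V"
  by (auto simp: digraph_def in_nbrs_def)

lemma is_kRDF_card_ge_1:
  assumes "is_kRDF k V A f" "v \<in> V" "f v \<noteq> {}"
  shows "1 \<le> card (f v)"
proof -
  have "f v \<subseteq> {1..k}" using assms(1,2) by (simp add: is_kRDF_def)
  then have "finite (f v)" by (rule finite_subset) simp
  with assms(3) show ?thesis by (simp add: Suc_le_eq card_gt_0_iff)
qed

lemma is_kRDF_weight_ge_card:
  assumes "is_kRDF k V A f" "\<forall>v\<in>V. f v \<noteq> {}"
  shows "card V \<le> weight V f"
proof -
  have "card V = (\<Sum>v\<in>V. 1)" by simp
  also have "\<dots> \<le> (\<Sum>v\<in>V. card (f v))"
    by (rule sum_mono) (use is_kRDF_card_ge_1[OF assms(1)] assms(2) in auto)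
  finally show ?thesis by (simp add: weight_def)
qed

lemma is_kRDF_in_nbrs_weight_ge:
  assumes "is_kRDF k V A f" "digraph V A" "w \<in> V" "f w = {}"
  shows "k \<le> (\<Sum>u\<in>in_nbrs A w. card (f u))"
proof -
  have fin: "finite (in_nbrs A w)"
    using digraph_in_nbrs_subset[of V A w] assms(2) by (auto simp: digraph_def intro: finite_subset)
  have "(\<Union>u\<in>in_nbrs A w. f u) = {1..k}" using assms by (simp add: is_kRDF_def)
  then have "k = card (\<Union>u\<in>in_nbrs A w. f u)" by simp
  also have "\<dots> \<le> (\<Sum>u\<in>in_nbrs A w. card (f u))"
    by (rule card_UN_le[OF fin])
  finally show ?thesis .
qed

lemma is_kRDF_source_nonempty:
  assumes "is_kRDF k V A f" "1 \<le> k" "v \<in> V" "in_nbrs A v = {}"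
  shows "f v \<noteq> {}"
  using assms by (auto simp: is_kRDF_def)

lemma is_kRDF_weight_ge_k:
  assumes "is_kRDF k V A f" "digraph V A" "k \<le> card V"
  shows "k \<le> weight V f"
proof (cases "\<exists>w\<in>V. f w = {}")
  case True
  then obtain w where w: "w \<in> V" "f w = {}" by blast
  have "(\<Sum>u\<in>in_nbrs A w. card (f u)) \<le> weight V f"
    unfolding weight_def
    using assms(2) digraph_in_nbrs_subset[OF assms(2)] by (simp add: digraph_def sum_mono2)
  then show ?thesis using is_kRDF_in_nbrs_weight_ge[OF assms(1,2) w] by linarith
next
  case False
  then show ?thesis using is_kRDF_weight_ge_card[OF assms(1)] assms(3) by auto
qed

lemma gamma_rk_ge_k:
  assumes "digraph V A" "k \<le> card V"
  shows "k \<le> gamma_rk k V A"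
proof -
  obtain g where g: "is_kRDF k V A g" "weight V g = gamma_rk k V A"
    using gamma_rk_attained[OF is_kRDF_const_full] by blast
  show ?thesis using is_kRDF_weight_ge_k[OF g(1) assms] g(2) by simp
qed

section \<open>Making a rainbow dominating function total\<close>

lemma connected_digraph_has_neighbour:
  assumes "digraph V A" "connected_digraph V A" "2 \<le> card V" "v \<in> V"
  shows "\<exists>u\<in>V. (u, v) \<in> A \<or> (v, u) \<in> A"
proof -
  have "\<not> V \<subseteq> {v}"
  proof
    assume "V \<subseteq> {v}"
    then have "card V \<le> 1" using card_mono[of "{v}" V] by simp
    with assms(3) show False by simp
  qed
  then obtain u where u: "u \<in> V" "u \<noteq> v" by blast
  have "(v, u) \<in> (A \<union> A\<inverse>)\<^sup>*"
    using assms(2,4) u(1) by (simp add: connected_digraph_def)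
  then obtain y where "(v, y) \<in> A \<union> A\<inverse>"
    by (rule converse_rtranclE) (use u in auto)
  with assms(1) show ?thesis by (auto simp: digraph_def)
qed

lemma is_TkRDF_const_full:
  assumes "1 \<le> k" "\<forall>v\<in>V. \<exists>u\<in>V. (u, v) \<in> A \<or> (v, u) \<in> A"
  shows "is_TkRDF k V A (\<lambda>_. {1..k})"
  unfolding is_TkRDF_iff using is_kRDF_const_full[of k V A] assms by auto

lemma weight_insert_on_le:
  assumes "finite V" "T \<subseteq> V"
  shows "weight V (\<lambda>v. if v \<in> T then insert c (f v) else f v) \<le> weight V f + card T"
proof -
  have "weight V (\<lambda>v. if v \<in> T then insert c (f v) else f v)
        \<le> (\<Sum>v\<in>V. card (f v) + (if v \<in> T then 1 else 0))"
    unfolding weight_def by (rule sum_mono) (auto simp: card_insert_le_m1 card_insert_if)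
  also have "\<dots> = weight V f + card T"
    using assms by (simp add: weight_def sum.distrib sum.If_cases Int_absorb1)
  finally show ?thesis .
qed

text \<open>The witness adds colour 1 at every vertex of T.\<close>

lemma gamma_trk_le_weight_plus_card:
  assumes "digraph V A" "1 \<le> k" "is_kRDF k V A f" "T \<subseteq> V"
    and nbr: "\<forall>v\<in>V. f v \<noteq> {} \<or> v \<in> T \<longrightarrow>
               (\<exists>u\<in>V. (f u \<noteq> {} \<or> u \<in> T) \<and> ((u, v) \<in> A \<or> (v, u) \<in> A))"
  shows "gamma_trk k V A \<le> weight V f + card T"
proof -
  define f' where "f' v = (if v \<in> T then insert 1 (f v) else f v)" for v
  have sub: "f v \<subseteq> f' v" for v by (simp add: f'_def subset_insertI)
  have range: "f' v \<subseteq> {1..k}" if "v \<in> V" for v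
    using assms(2,3) that by (auto simp: f'_def is_kRDF_def)
  have supp: "f' v \<noteq> {} \<longleftrightarrow> f v \<noteq> {} \<or> v \<in> T" for v by (simp add: f'_def)
  have "is_kRDF k V A f'"
    unfolding is_kRDF_def
  proof (intro conjI ballI impI)
    fix v assume v: "v \<in> V" "f' v = {}"
    then have "(\<Union>u\<in>in_nbrs A v. f u) = {1..k}"
      using assms(3) sub[of v] by (auto simp: is_kRDF_def)
    moreover have "(\<Union>u\<in>in_nbrs A v. f u) \<subseteq> (\<Union>u\<in>in_nbrs A v. f' u)"
      using sub by blast
    moreover have "(\<Union>u\<in>in_nbrs A v. f' u) \<subseteq> {1..k}"
      using range digraph_in_nbrs_subset[OF assms(1)] by blast
    ultimately show "(\<Union>u\<in>in_nbrs A v. f' u) = {1..k}" by blast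
  qed (rule range)
  then have "is_TkRDF k V A f'"
    using nbr by (simp add: is_TkRDF_iff supp)
  then have "gamma_trk k V A \<le> weight V f'" by (rule gamma_trk_le)
  also have "\<dots> \<le> weight V f + card T"
    unfolding f'_def using assms(1,4) by (intro weight_insert_on_le) (auto simp: digraph_def)
  finally show ?thesis .
qed

text \<open>If f vanishes at w, T consists of w and one neighbour of every vertex of the support
  outside N(w); the card bound holds because N(w) alone carries weight at least k.\<close>

lemma total_patch_exists:
  assumes D: "digraph V A" and k: "1 \<le> k" "k \<le> card V" and f: "is_kRDF k V A f"
    and nbrs: "\<forall>v\<in>V. \<exists>u\<in>V. (u, v) \<in> A \<or> (v, u) \<in> A"
  shows "\<exists>T\<subseteq>V. card T + k \<le> weight V f + 1 \<and>
           (\<forall>v\<in>V. f v \<noteq> {} \<or> v \<in> T \<longrightarrow>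
              (\<exists>u\<in>V. (f u \<noteq> {} \<or> u \<in> T) \<and> ((u, v) \<in> A \<or> (v, u) \<in> A)))"
proof (cases "\<exists>w\<in>V. f w = {}")
  case False
  then show ?thesis
    using nbrs is_kRDF_weight_ge_card[OF f] k by (intro exI[of _ "{}"]) auto
next
  case True
  then obtain w where w: "w \<in> V" "f w = {}" by blast
  have fin: "finite V" using D by (simp add: digraph_def)
  define N where "N = in_nbrs A w"
  define S where "S = {v\<in>V. f v \<noteq> {}}"
  define g where "g v = (SOME u. u \<in> V \<and> ((u, v) \<in> A \<or> (v, u) \<in> A))" for v
  define T where "T = insert w (g ` (S - N))"
  have g: "g v \<in> V \<and> ((g v, v) \<in> A \<or> (v, g v) \<in> A)" if "v \<in> V" for v
    unfolding g_def by (rule someI_ex) (use nbrs that in blast)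
  have NV: "N \<subseteq> V" using digraph_in_nbrs_subset[OF D] by (simp add: N_def)
  have finSN: "finite (S - N)" using fin by (simp add: S_def)
  have TV: "T \<subseteq> V" using w g by (auto simp: T_def S_def)
  have "card T \<le> Suc (card (g ` (S - N)))"
    unfolding T_def using finSN by (simp add: card_insert_if)
  then have "card T \<le> card (S - N) + 1"
    using card_image_le[OF finSN, of g] by simp
  moreover have "card (S - N) + k \<le> weight V f"
  proof -
    have "card (S - N) = (\<Sum>u\<in>S - N. 1)" by simp
    also have "\<dots> \<le> (\<Sum>u\<in>S - N. card (f u))"
      by (rule sum_mono) (use is_kRDF_card_ge_1[OF f] in \<open>auto simp: S_def\<close>)
    also have "\<dots> \<le> (\<Sum>u\<in>V - N. card (f u))"
      by (rule sum_mono2) (use fin in \<open>auto simp: S_def\<close>)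
    finally show ?thesis
      using is_kRDF_in_nbrs_weight_ge[OF f D w] sum.subset_diff[OF NV fin, of "\<lambda>u. card (f u)"]
      by (simp add: weight_def N_def)
  qed
  moreover have "\<exists>u\<in>V. (f u \<noteq> {} \<or> u \<in> T) \<and> ((u, v) \<in> A \<or> (v, u) \<in> A)"
    if v: "v \<in> V" "f v \<noteq> {} \<or> v \<in> T" for v
  proof (cases "v \<in> S")
    case True
    then show ?thesis
      using w g[OF v(1)] by (cases "v \<in> N") (auto simp: T_def N_def in_nbrs_def)
  next
    case False
    then have "v \<in> T" using v by (simp add: S_def)
    show ?thesis
    proof (cases "v = w")
      case True
      have "1 \<in> (\<Union>u\<in>N. f u)"
        using f w k by (simp add: is_kRDF_def N_def)
      then obtain u where "u \<in> N" "1 \<in> f u" by blast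
      then show ?thesis using NV True by (auto simp: N_def in_nbrs_def)
    next
      case False
      then obtain x where "x \<in> S" "v = g x" using \<open>v \<in> T\<close> by (auto simp: T_def)
      then show ?thesis using g[of x] by (auto simp: S_def)
    qed
  qed
  ultimately show ?thesis using TV by (intro exI[of _ T]) auto
qed

lemma gamma_trk_le_twice_gamma_rk:
  assumes "1 \<le> k" "digraph V A" "connected_digraph V A" "max k 2 \<le> card V"
  shows "int (gamma_trk k V A) \<le> 2 * int (gamma_rk k V A) - int k + 1"
proof -
  obtain f where f: "is_kRDF k V A f" "weight V f = gamma_rk k V A"
    using gamma_rk_attained[OF is_kRDF_const_full] by blast
  have nbrs: "\<forall>v\<in>V. \<exists>u\<in>V. (u, v) \<in> A \<or> (v, u) \<in> A"
    using connected_digraph_has_neighbour assms(2-4) by auto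
  obtain T where "T \<subseteq> V" "card T + k \<le> weight V f + 1"
    "\<forall>v\<in>V. f v \<noteq> {} \<or> v \<in> T \<longrightarrow>
       (\<exists>u\<in>V. (f u \<noteq> {} \<or> u \<in> T) \<and> ((u, v) \<in> A \<or> (v, u) \<in> A))"
    using total_patch_exists[OF assms(2,1) _ f(1) nbrs] assms(4) by auto
  then have "gamma_trk k V A \<le> weight V f + card T"
    using gamma_trk_le_weight_plus_card[OF assms(2,1) f(1)] by blast
  with \<open>card T + k \<le> weight V f + 1\<close> f(2) show ?thesis by linarith
qed

section \<open>Sharpness\<close>

lemma connected_digraph_if_hub:
  assumes "c \<in> V" "\<forall>v\<in>V. v \<noteq> c \<longrightarrow> (c, v) \<in> A \<union> A\<inverse>"
  shows "connected_digraph V A"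
  unfolding connected_digraph_def
proof (intro ballI)
  fix u v assume "u \<in> V" "v \<in> V"
  then have "(u, c) \<in> (A \<union> A\<inverse>)\<^sup>*" "(c, v) \<in> (A \<union> A\<inverse>)\<^sup>*"
    using assms(2) by (metis UnCI Un_iff converse_iff r_into_rtrancl rtrancl.rtrancl_refl)+
  then show "(u, v) \<in> (A \<union> A\<inverse>)\<^sup>*" by (rule rtrancl_trans)
qed

lemma gamma_trk_eq_gamma_rk_if_le:
  assumes "is_TkRDF k V A f" "weight V f \<le> gamma_rk k V A"
  shows "gamma_trk k V A = gamma_rk k V A"
  using gamma_rk_le_gamma_trk[OF assms(1)] gamma_trk_le[OF assms(1)] assms(2) by linarith

lemma complete_digraph_gamma_trk_eq_gamma_rk:
  assumes "2 \<le> k"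
  defines "B \<equiv> {(u, v). u < k \<and> v < k \<and> u \<noteq> v}"
  shows "digraph {0..<k} B \<and> connected_digraph {0..<k} B \<and>
         gamma_trk k {0..<k} B = gamma_rk k {0..<k} B"
proof -
  have D: "digraph {0..<k} B" by (auto simp: digraph_def B_def)
  have C: "connected_digraph {0..<k} B"
    by (rule connected_digraph_if_hub[of 0]) (use assms in \<open>auto simp: B_def\<close>)
  define f where "f v = {Suc v}" for v :: nat
  have "is_kRDF k {0..<k} B f" by (auto simp: is_kRDF_def f_def)
  moreover have "\<exists>u\<in>{0..<k}. (u, v) \<in> B" if "v \<in> {0..<k}" for v
    using assms that by (intro bexI[of _ "if v = 0 then 1 else 0"]) (auto simp: B_def)
  ultimately have "is_TkRDF k {0..<k} B f"
    unfolding is_TkRDF_iff f_def by blast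
  moreover have "weight {0..<k} f \<le> gamma_rk k {0..<k} B"
    using gamma_rk_ge_k[OF D] by (simp add: weight_def f_def)
  ultimately show ?thesis using D C gamma_trk_eq_gamma_rk_if_le by blast
qed

lemma path_gamma_tr1_eq_gamma_r1:
  defines "B \<equiv> {(0, 1), (1, 2)} :: (nat \<times> nat) set"
  shows "digraph {0, 1, 2} B \<and> connected_digraph {0, 1, 2} B \<and>
         gamma_trk 1 {0, 1, 2} B = gamma_rk 1 {0, 1, 2} B"
proof -
  have D: "digraph {0, 1, 2} B" by (auto simp: digraph_def B_def)
  have C: "connected_digraph {0, 1, 2} B"
    by (rule connected_digraph_if_hub[of 1]) (auto simp: B_def)
  define f where "f v = (if v = 2 then {} else {1 :: nat})" for v :: nat
  have "is_kRDF 1 {0, 1, 2} B f"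
    by (auto simp: is_kRDF_def f_def in_nbrs_def B_def)
  then have Tf: "is_TkRDF 1 {0, 1, 2} B f"
    by (auto simp: is_TkRDF_iff f_def B_def)
  have lower: "2 \<le> weight {0, 1, 2} g" if g: "is_kRDF 1 {0, 1, 2} B g" for g
  proof -
    have "in_nbrs B 0 = {}" "in_nbrs B 2 = {1}" by (auto simp: in_nbrs_def B_def)
    then have "g 0 \<noteq> {}" "g 1 \<noteq> {} \<or> g 2 \<noteq> {}"
      using g by (auto simp: is_kRDF_def)
    then have "1 \<le> card (g 0)" "1 \<le> card (g 1) + card (g 2)"
      using is_kRDF_card_ge_1[OF g] by fastforce+
    then show ?thesis by (simp add: weight_def)
  qed
  obtain g where g: "is_kRDF 1 {0, 1, 2} B g" "weight {0, 1, 2} g = gamma_rk 1 {0, 1, 2} B"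
    using gamma_rk_attained[OF is_kRDF_const_full] by blast
  then have "weight {0, 1, 2} f \<le> gamma_rk 1 {0, 1, 2} B"
    using lower[OF g(1)] by (simp add: weight_def f_def)
  then show ?thesis using D C gamma_trk_eq_gamma_rk_if_le[OF Tf] by blast
qed

text \<open>In the out-star the centre has no in-neighbour, so every kRDF colours it; a total one
  also colours a leaf, and if it leaves some leaf empty the centre must carry all k colours.\<close>

lemma out_star_gamma_rk_gamma_trk:
  assumes "1 \<le> k"
  defines "B \<equiv> (\<lambda>i. (0 :: nat, i)) ` {1..k}"
  shows "digraph {0..k} B \<and> connected_digraph {0..k} B \<and>
         gamma_rk k {0..k} B = k \<and> gamma_trk k {0..k} B = k + 1"
proof -
  let ?W = "{0..k}"
  have D: "digraph ?W B" by (auto simp: digraph_def B_def)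
  have C: "connected_digraph ?W B"
    by (rule connected_digraph_if_hub[of 0]) (auto simp: B_def)
  have source: "in_nbrs B 0 = {}" by (auto simp: in_nbrs_def B_def)
  have leaf: "in_nbrs B j = {0}" if "j \<in> ?W" "j \<noteq> 0" for j
    using that by (auto simp: in_nbrs_def B_def)
  define f where "f v = (if v = 0 then {1..k} else {})" for v :: nat
  have kf: "is_kRDF k ?W B f"
    using leaf assms(1) by (auto simp: is_kRDF_def f_def)
  have "weight ?W f = (\<Sum>v\<in>?W. if v = 0 then k else 0)"
    unfolding weight_def by (rule sum.cong) (auto simp: f_def)
  then have wf: "weight ?W f = k" by simp
  then have rk: "gamma_rk k ?W B = k"
    using gamma_rk_le[OF kf] gamma_rk_ge_k[OF D, of k] by simp
  have arc: "(0, v) \<in> B" if "v \<in> ?W" "v \<noteq> 0" for v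
    using that by (auto simp: B_def)
  have W01: "0 \<in> ?W" "1 \<in> ?W" using assms(1) by auto
  have supp: "f v \<noteq> {} \<or> v \<in> {1} \<longleftrightarrow> v = 0 \<or> v = 1" for v
    using assms(1) by (auto simp: f_def)
  have "\<forall>v\<in>?W. f v \<noteq> {} \<or> v \<in> {1} \<longrightarrow>
          (\<exists>u\<in>?W. (f u \<noteq> {} \<or> u \<in> {1}) \<and> ((u, v) \<in> B \<or> (v, u) \<in> B))"
    unfolding supp using W01 arc[OF W01(2)] by blast
  then have "gamma_trk k ?W B \<le> k + 1"
    using gamma_trk_le_weight_plus_card[OF D assms(1) kf, of "{1}"] assms(1) wf by simp
  moreover have "k + 1 \<le> gamma_trk k ?W B"
  proof -
    have "\<exists>u\<in>?W. (u, v) \<in> B \<or> (v, u) \<in> B" if "v \<in> ?W" for v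
    proof (cases "v = 0")
      case True
      then show ?thesis using arc W01 by (intro bexI[of _ 1]) auto
    next
      case False
      then show ?thesis using arc[OF that] by (intro bexI[of _ 0]) auto
    qed
    then have "\<forall>v\<in>?W. \<exists>u\<in>?W. (u, v) \<in> B \<or> (v, u) \<in> B" by blast
    then obtain g where g: "is_TkRDF k ?W B g" "weight ?W g = gamma_trk k ?W B"
      using gamma_trk_attained[OF is_TkRDF_const_full[OF assms(1)]] by blast
    have kg: "is_kRDF k ?W B g" using g(1) by (simp add: is_TkRDF_iff)
    have "g 0 \<noteq> {}" using is_kRDF_source_nonempty[OF kg assms(1) _ source] by simp
    then obtain u where u: "u \<in> ?W" "g u \<noteq> {}" "(u, 0) \<in> B \<or> (0, u) \<in> B"
      using g(1) W01(1) unfolding is_TkRDF_iff by blast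
    then have "u \<noteq> 0" by (auto simp: B_def)
    have "k + 1 \<le> weight ?W g"
    proof (cases "\<exists>j\<in>?W. g j = {}")
      case True
      then obtain j where "j \<in> ?W" "g j = {}" by blast
      moreover have "j \<noteq> 0" using \<open>g 0 \<noteq> {}\<close> \<open>g j = {}\<close> by auto
      ultimately have "(\<Union>u\<in>in_nbrs B j. g u) = {1..k}" "in_nbrs B j = {0}"
        using kg leaf[of j] by (auto simp: is_kRDF_def)
      then have "g 0 = {1..k}" by simp
      moreover have "card (g 0) + card (g u) \<le> weight ?W g"
        using u(1) \<open>u \<noteq> 0\<close> sum_mono2[of ?W "{0, u}" "\<lambda>v. card (g v)"] by (simp add: weight_def)
      ultimately show ?thesis using is_kRDF_card_ge_1[OF kg u(1,2)] by simp
    next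
      case False
      then show ?thesis using is_kRDF_weight_ge_card[OF kg] by auto
    qed
    then show ?thesis using g(2) by simp
  qed
  ultimately show ?thesis using D C rk by simp
qed

theorem theorem2p3:
  fixes V :: "'a set" and A :: "('a \<times> 'a) set" and k :: nat
  assumes "k \<ge> 1" and "digraph V A" and "connected_digraph V A"
    and "card V \<ge> max k 2"
  shows "gamma_rk k V A \<le> gamma_trk k V A \<and>
         int (gamma_trk k V A) \<le> 2 * int (gamma_rk k V A) - int k + 1 \<and>
         (\<forall>k::nat. k \<ge> 1 \<longrightarrow>
           (\<exists>(W :: nat set) B. digraph W B \<and> connected_digraph W B \<and> card W \<ge> max k 2 \<and>
              gamma_trk k W B = gamma_rk k W B)) \<and>
         (\<forall>k::nat. k \<ge> 1 \<longrightarrow>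
           (\<exists>(W :: nat set) B. digraph W B \<and> connected_digraph W B \<and> card W \<ge> max k 2 \<and>
              int (gamma_trk k W B) = 2 * int (gamma_rk k W B) - int k + 1))"
proof (intro conjI allI impI)
  have "\<forall>v\<in>V. \<exists>u\<in>V. (u, v) \<in> A \<or> (v, u) \<in> A"
    using connected_digraph_has_neighbour assms(2-4) by auto
  then show "gamma_rk k V A \<le> gamma_trk k V A"
    by (rule gamma_rk_le_gamma_trk[OF is_TkRDF_const_full[OF assms(1)]])
  show "int (gamma_trk k V A) \<le> 2 * int (gamma_rk k V A) - int k + 1"
    using gamma_trk_le_twice_gamma_rk[OF assms] .
next
  fix k :: nat assume "k \<ge> 1"
  then consider "k = 1" | "2 \<le> k" by linarith
  then show "\<exists>(W :: nat set) B. digraph W B \<and> connected_digraph W B \<and> card W \<ge> max k 2 \<and>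
               gamma_trk k W B = gamma_rk k W B"
  proof cases
    case 1
    then show ?thesis using path_gamma_tr1_eq_gamma_r1 by (intro exI) auto
  next
    case 2
    then show ?thesis using complete_digraph_gamma_trk_eq_gamma_rk by (intro exI) auto
  qed
next
  fix k :: nat assume "k \<ge> 1"
  then show "\<exists>(W :: nat set) B. digraph W B \<and> connected_digraph W B \<and> card W \<ge> max k 2 \<and>
               int (gamma_trk k W B) = 2 * int (gamma_rk k W B) - int k + 1"
    using out_star_gamma_rk_gamma_trk by (intro exI) auto
qed

end
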